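(* Let $\triangle ABC$ be a nondegenerate triangle circumscribed about a central conic such that either the center of the conic or one of its foci coincides with the circumcenter of $\triangle ABC$. Then $\triangle ABC$ has no right angle.
   Context: A central conic is a non-degenerate ellipse or hyperbola. A triangle is circumscribed about a conic if each of its three sidelines is tangent to the conic. *)

theory Defs
  imports "HOL-Analysis.Analysis"
begin

text \<open>A central conic in the Euclidean plane is given by a centre c, an orthonormal frame
  (e1, e2), semi-axes a, b > 0 and a sign s: s = 1 gives the ellipse
  (u/a)^2 + (v/b)^2 = 1 (normalised so that a \<ge> b, i.e. e1 is the major axis),
  s = -1 gives the hyperbola (u/a)^2 - (v/b)^2 = 1, where u = (p-c).e1, v = (p-c).e2.\<close>

definition central_conic ::
  "real^2 \<Rightarrow> real^2 \<Rightarrow> real^2 \<Rightarrow> real \<Rightarrow> real \<Rightarrow> real \<Rightarrow> bool" where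
  "central_conic c e1 e2 a b s \<longleftrightarrow>
     norm e1 = 1 \<and> norm e2 = 1 \<and> e1 \<bullet> e2 = 0 \<and> a > 0 \<and> b > 0 \<and>
     ((s = 1 \<and> b \<le> a) \<or> s = -1)"

definition conic_fun ::
  "real^2 \<Rightarrow> real^2 \<Rightarrow> real^2 \<Rightarrow> real \<Rightarrow> real \<Rightarrow> real \<Rightarrow> real^2 \<Rightarrow> real" where
  "conic_fun c e1 e2 a b s p = (((p - c) \<bullet> e1) / a)^2 + s * (((p - c) \<bullet> e2) / b)^2 - 1"

definition conic_set ::
  "real^2 \<Rightarrow> real^2 \<Rightarrow> real^2 \<Rightarrow> real \<Rightarrow> real \<Rightarrow> real \<Rightarrow> (real^2) set" where
  "conic_set c e1 e2 a b s = {p. conic_fun c e1 e2 a b s p = 0}"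

definition conic_foci ::
  "real^2 \<Rightarrow> real^2 \<Rightarrow> real^2 \<Rightarrow> real \<Rightarrow> real \<Rightarrow> real \<Rightarrow> (real^2) set" where
  "conic_foci c e1 e2 a b s =
     {c + sqrt (a^2 - s * b^2) *\<^sub>R e1, c - sqrt (a^2 - s * b^2) *\<^sub>R e1}"

text \<open>The line through P and Q (P \<noteq> Q) is tangent to the conic if it meets the conic at a
  point p where the line's direction Q - P is orthogonal to the gradient of the defining
  function, i.e. the line is the tangent line of the conic at p.\<close>

definition tangent_line ::
  "real^2 \<Rightarrow> real^2 \<Rightarrow> real^2 \<Rightarrow> real \<Rightarrow> real \<Rightarrow> real \<Rightarrow> real^2 \<Rightarrow> real^2 \<Rightarrow> bool" where
  "tangent_line c e1 e2 a b s P Q \<longleftrightarrow> P \<noteq> Q \<and>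
     (\<exists>t::real. let p = P + t *\<^sub>R (Q - P) in
        p \<in> conic_set c e1 e2 a b s \<and>
        ((p - c) \<bullet> e1) / a^2 * (e1 \<bullet> (Q - P)) + s * ((p - c) \<bullet> e2) / b^2 * (e2 \<bullet> (Q - P)) = 0)"

definition is_circumcenter :: "real^2 \<Rightarrow> real^2 \<Rightarrow> real^2 \<Rightarrow> real^2 \<Rightarrow> bool" where
  "is_circumcenter O' A B C \<longleftrightarrow> dist O' A = dist O' B \<and> dist O' B = dist O' C"

definition right_angle_at :: "real^2 \<Rightarrow> real^2 \<Rightarrow> real^2 \<Rightarrow> bool" where
  "right_angle_at A B C \<longleftrightarrow> (B - A) \<bullet> (C - A) = 0"

end

(* Suppose the triangle had a right angle. By Thales its circumcentre is then the midpoint of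
   the hypotenuse, a point of one of the tangent sidelines. If that line touches the conic at p,
   all its points x satisfy the polar equation B(p, x) = 1, where B is the symmetric bilinear
   form of the conic about its centre c. At the centre B(p, c) = 0. At a focus c +- f e1 the
   equation reads u f = +-a^2 with u the major-axis coordinate of p, i.e. p would lie on a
   directrix; but on an ellipse |u| <= a < a^2/f, and on a hyperbola |u| >= a > a^2/f. *)

theory Submission
  imports Defs
begin

lemma orthogonal_to_orthogonal_pair_eq_0:
  fixes q u v :: "'a::euclidean_space"
  assumes "DIM('a) = 2" and "orthogonal u v" and "u \<noteq> 0" and "v \<noteq> 0"
    and "orthogonal q u" and "orthogonal q v"
  shows "q = 0"
proof -
  have "u \<noteq> v"
    using assms(2,3) orthogonal_self by blast
  have "independent {u, v}"
    using assms(2-4) orthogonal_commute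
    by (intro pairwise_orthogonal_independent) (auto simp: pairwise_insert)
  moreover have "dim (UNIV :: 'a set) \<le> card {u, v}"
    using assms(1) \<open>u \<noteq> v\<close> by simp
  ultimately have "q \<in> span {u, v}"
    using card_ge_dim_independent by blast
  moreover have "\<forall>w \<in> {u, v}. orthogonal q w"
    using assms(5,6) by blast
  ultimately have "orthogonal q q"
    using orthogonal_to_span by blast
  then show ?thesis
    by (simp add: orthogonal_self)
qed

lemma dist_eq_iff_orthogonal_midpoint:
  fixes P X Y :: "'a::real_inner"
  shows "dist P X = dist P Y \<longleftrightarrow> (P - midpoint X Y) \<bullet> (Y - X) = 0"
proof -
  have "(P - X) \<bullet> (P - X) - (P - Y) \<bullet> (P - Y) = 2 * ((P - midpoint X Y) \<bullet> (Y - X))"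
    by (simp add: midpoint_def inner_simps inner_commute algebra_simps)
  moreover have "dist P X = dist P Y \<longleftrightarrow> (P - X) \<bullet> (P - X) = (P - Y) \<bullet> (P - Y)"
    by (simp add: dist_norm norm_eq_sqrt_inner)
  ultimately show ?thesis
    by linarith
qed

lemma equidistant_right_triangle_eq_midpoint:
  fixes X Y Z O' :: "'a::euclidean_space"
  assumes "DIM('a) = 2" and "(Y - X) \<bullet> (Z - X) = 0" and "X \<noteq> Y" and "X \<noteq> Z"
    and "dist O' X = dist O' Y" and "dist O' X = dist O' Z"
  shows "O' = midpoint Y Z"
proof -
  have "(O' - midpoint X Y) \<bullet> (Y - X) = 0" "(O' - midpoint X Z) \<bullet> (Z - X) = 0"
    using assms(5,6) dist_eq_iff_orthogonal_midpoint by blast+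
  moreover have "(O' - midpoint Y Z) \<bullet> (Y - X) = (O' - midpoint X Y) \<bullet> (Y - X) - (Z - X) \<bullet> (Y - X) / 2"
    and "(O' - midpoint Y Z) \<bullet> (Z - X) = (O' - midpoint X Z) \<bullet> (Z - X) - (Y - X) \<bullet> (Z - X) / 2"
    by (simp_all add: midpoint_def inner_simps inner_commute field_simps)
  ultimately have "orthogonal (O' - midpoint Y Z) (Y - X)"
    and "orthogonal (O' - midpoint Y Z) (Z - X)"
    using assms(2) by (simp_all add: orthogonal_def inner_commute)
  moreover have "orthogonal (Y - X) (Z - X)" "Y - X \<noteq> 0" "Z - X \<noteq> 0"
    using assms(2-4) by (auto simp: orthogonal_def)
  ultimately have "O' - midpoint Y Z = 0"
    using assms(1) orthogonal_to_orthogonal_pair_eq_0 by blast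
  then show ?thesis
    by simp
qed

(* With f^2 = a^2 - s b^2 the squared focal distance, this says u <> +-a^2/f. *)
lemma conic_point_not_on_directrix:
  fixes a b s u v :: real
  assumes "a > 0" and "b > 0" and "(s = 1 \<and> b \<le> a) \<or> s = -1"
    and "(u / a)^2 + s * (v / b)^2 = 1"
  shows "u^2 * (a^2 - s * b^2) \<noteq> a^4"
  using assms(3)
proof
  assume ellipse: "s = 1 \<and> b \<le> a"
  then have "(u / a)^2 + (v / b)^2 = 1"
    using assms(4) by simp
  then have "(u / a)^2 \<le> 1"
    using zero_le_power2[of "v / b"] by linarith
  then have "u^2 \<le> a^2"
    using assms(1) by (simp add: power_divide)
  moreover have "0 \<le> a^2 - b^2"
    using ellipse assms(2) by (simp add: power_mono)
  ultimately have "u^2 * (a^2 - b^2) \<le> a^2 * (a^2 - b^2)"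
    by (rule mult_right_mono)
  also have "\<dots> < a^4"
    using assms(1,2) by (simp add: algebra_simps power4_eq_xxxx power2_eq_square)
  finally show ?thesis
    using ellipse by simp
next
  assume hyperbola: "s = -1"
  then have "(u / a)^2 - (v / b)^2 = 1"
    using assms(4) by simp
  then have "1 \<le> (u / a)^2"
    using zero_le_power2[of "v / b"] by linarith
  then have "a^2 \<le> u^2"
    using assms(1) by (simp add: power_divide)
  then have "a^2 * (a^2 + b^2) \<le> u^2 * (a^2 + b^2)"
    by (simp add: mult_right_mono)
  moreover have "a^4 < a^2 * (a^2 + b^2)"
    using assms(1,2) by (simp add: algebra_simps power4_eq_xxxx power2_eq_square)
  ultimately show ?thesis
    using hyperbola by simp
qed

definition conic_polar ::
  "real^2 \<Rightarrow> real^2 \<Rightarrow> real^2 \<Rightarrow> real \<Rightarrow> real \<Rightarrow> real \<Rightarrow> real^2 \<Rightarrow> real^2 \<Rightarrow> real" where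
  "conic_polar c e1 e2 a b s p x =
     ((p - c) \<bullet> e1) * ((x - c) \<bullet> e1) / a^2 + s * ((p - c) \<bullet> e2) * ((x - c) \<bullet> e2) / b^2"

lemma conic_polar_self: "conic_polar c e1 e2 a b s p p = conic_fun c e1 e2 a b s p + 1"
  by (simp add: conic_polar_def conic_fun_def power_divide power2_eq_square)

lemma conic_polar_center: "conic_polar c e1 e2 a b s p c = 0"
  by (simp add: conic_polar_def)

lemma tangent_line_on_polar:
  assumes "tangent_line c e1 e2 a b s P Q"
  obtains p where "p \<in> conic_set c e1 e2 a b s"
    and "\<And>t. conic_polar c e1 e2 a b s p (P + t *\<^sub>R (Q - P)) = 1"
proof -
  obtain t0 where on_conic: "P + t0 *\<^sub>R (Q - P) \<in> conic_set c e1 e2 a b s"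
    and tangent: "((P + t0 *\<^sub>R (Q - P) - c) \<bullet> e1) / a^2 * (e1 \<bullet> (Q - P))
      + s * ((P + t0 *\<^sub>R (Q - P) - c) \<bullet> e2) / b^2 * (e2 \<bullet> (Q - P)) = 0"
    using assms unfolding tangent_line_def Let_def by blast
  define p where "p = P + t0 *\<^sub>R (Q - P)"
  have "conic_polar c e1 e2 a b s p (P + t *\<^sub>R (Q - P)) = 1" for t
  proof -
    define u v where "u = (p - c) \<bullet> e1" and "v = (p - c) \<bullet> e2"
    define d1 d2 where "d1 = e1 \<bullet> (Q - P)" and "d2 = e2 \<bullet> (Q - P)"
    have "P + t *\<^sub>R (Q - P) - c = (p - c) + (t - t0) *\<^sub>R (Q - P)"
      by (simp add: p_def algebra_simps)
    then have x1: "(P + t *\<^sub>R (Q - P) - c) \<bullet> e1 = u + (t - t0) * d1"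
      and x2: "(P + t *\<^sub>R (Q - P) - c) \<bullet> e2 = v + (t - t0) * d2"
      by (simp_all only: inner_add_left inner_scaleR_left u_def v_def d1_def d2_def
          inner_commute[of "Q - P"])
    have "conic_polar c e1 e2 a b s p (P + t *\<^sub>R (Q - P))
        = u * (u + (t - t0) * d1) / a^2 + s * v * (v + (t - t0) * d2) / b^2"
      unfolding conic_polar_def x1 x2 u_def v_def ..
    also have "\<dots> = (u * u / a^2 + s * v * v / b^2) + (t - t0) * (u / a^2 * d1 + s * v / b^2 * d2)"
      by (simp add: algebra_simps add_divide_distrib diff_divide_distrib)
    also have "\<dots> = 1"
      using on_conic tangent
      by (simp add: conic_set_def conic_fun_def p_def u_def v_def d1_def d2_def
          power_divide power2_eq_square)
    finally show ?thesis .
  qed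
  with on_conic show ?thesis
    using that p_def by blast
qed

lemma conic_polar_focus_ne_1:
  assumes "central_conic c e1 e2 a b s" and "p \<in> conic_set c e1 e2 a b s"
    and "F \<in> conic_foci c e1 e2 a b s"
  shows "conic_polar c e1 e2 a b s p F \<noteq> 1"
proof
  assume polar: "conic_polar c e1 e2 a b s p F = 1"
  have a: "a > 0" and b: "b > 0" and type: "(s = 1 \<and> b \<le> a) \<or> s = -1"
    and e1: "e1 \<bullet> e1 = 1" and e12: "e1 \<bullet> e2 = 0"
    using assms(1) by (auto simp: central_conic_def norm_eq_1)
  obtain f where F: "F - c = f *\<^sub>R e1" and f: "f^2 = a^2 - s * b^2"
  proof -
    have "0 \<le> a^2 - s * b^2"
      using type b by (auto simp: power_mono)
    then show ?thesis
      using assms(3) that[of "sqrt (a^2 - s * b^2)"] that[of "- sqrt (a^2 - s * b^2)"]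
      by (auto simp: conic_foci_def)
  qed
  define u v where "u = (p - c) \<bullet> e1" and "v = (p - c) \<bullet> e2"
  have "(F - c) \<bullet> e1 = f" and "(F - c) \<bullet> e2 = 0"
    unfolding F using e1 e12 by simp_all
  then have "conic_polar c e1 e2 a b s p F = u * f / a^2"
    by (simp add: conic_polar_def u_def)
  with polar have "u * f = a^2"
    by (simp add: divide_eq_1_iff)
  then have "u^2 * (a^2 - s * b^2) = a^4"
    by (metis f power_mult_distrib power_even_eq numeral_Bit0 mult_2_right)
  moreover have "(u / a)^2 + s * (v / b)^2 = 1"
    using assms(2) by (simp add: conic_set_def conic_fun_def u_def v_def)
  ultimately show False
    using conic_point_not_on_directrix a b type by blast
qed

lemma tangent_line_avoids_center_and_foci:
  assumes "central_conic c e1 e2 a b s" and "tangent_line c e1 e2 a b s P Q"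
  shows "P + t *\<^sub>R (Q - P) \<noteq> c" and "P + t *\<^sub>R (Q - P) \<notin> conic_foci c e1 e2 a b s"
proof -
  obtain p where p: "p \<in> conic_set c e1 e2 a b s"
    and polar: "conic_polar c e1 e2 a b s p (P + t *\<^sub>R (Q - P)) = 1"
    using tangent_line_on_polar assms(2) by metis
  show "P + t *\<^sub>R (Q - P) \<noteq> c"
    using polar conic_polar_center by fastforce
  show "P + t *\<^sub>R (Q - P) \<notin> conic_foci c e1 e2 a b s"
    using polar conic_polar_focus_ne_1[OF assms(1) p] by blast
qed

lemma is_circumcenter_rotate: "is_circumcenter O' A B C \<Longrightarrow> is_circumcenter O' B C A"
  by (simp add: is_circumcenter_def)

lemma no_right_angle_opposite_tangent_side:
  assumes "central_conic c e1 e2 a b s" and "tangent_line c e1 e2 a b s Y Z"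
    and "X \<noteq> Y" and "X \<noteq> Z" and "is_circumcenter O' X Y Z"
    and "O' = c \<or> O' \<in> conic_foci c e1 e2 a b s"
  shows "\<not> right_angle_at X Y Z"
proof
  assume "right_angle_at X Y Z"
  then have "(Y - X) \<bullet> (Z - X) = 0"
    by (simp add: right_angle_at_def)
  moreover have "dist O' X = dist O' Y" and "dist O' X = dist O' Z"
    using assms(5) by (simp_all add: is_circumcenter_def)
  ultimately have "O' = midpoint Y Z"
    by (intro equidistant_right_triangle_eq_midpoint[OF _ _ assms(3,4)]) simp_all
  also have "\<dots> = Y + (1/2) *\<^sub>R (Z - Y)"
    unfolding midpoint_eq_iff by (simp add: algebra_simps flip: scaleR_left_distrib)
  finally show False
    using assms(6) tangent_line_avoids_center_and_foci[OF assms(1,2)] by metis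
qed

theorem proposition2p2:
  fixes A B C c e1 e2 :: "real^2" and a b s :: real and O' :: "real^2"
  assumes "\<not> collinear {A, B, C}"
    and "central_conic c e1 e2 a b s"
    and "tangent_line c e1 e2 a b s A B"
    and "tangent_line c e1 e2 a b s B C"
    and "tangent_line c e1 e2 a b s C A"
    and "is_circumcenter O' A B C"
    and "O' = c \<or> O' \<in> conic_foci c e1 e2 a b s"
  shows "\<not> right_angle_at A B C \<and> \<not> right_angle_at B C A \<and> \<not> right_angle_at C A B"
proof -
  have "A \<noteq> B" "B \<noteq> C" "C \<noteq> A"
    using assms(1) collinear_2 by (auto simp: insert_commute)
  moreover have "is_circumcenter O' B C A" "is_circumcenter O' C A B"
    using assms(6) is_circumcenter_rotate by blast+
  ultimately show ?thesis
    using no_right_angle_opposite_tangent_side[OF assms(2)] assms(3-7) by metis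
qed

end
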